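(* For every $n\in\mathbb N$, $TC(M_n)=1$, where $M_n$ is the algebra of complex $n\times n$ matrices.
   Context: All tensor products are minimal. For a unital $C^*$-algebra $A$ let $p_0,p_1:A\to A\otimes A$ be $p_0(a)=a\otimes 1$, $p_1(a)=1\otimes a$, and for $t\in[0,1]$ and a $C^*$-algebra $B$ let $\mathrm{ev}_t:B\otimes C[0,1]\to B$ be evaluation at $t$. The topological complexity $TC(A)$ is the minimal number $n$ such that there exist $C^*$-algebras $B_1,\dots,B_n$ with surjective $*$-homomorphisms $q_i:A\otimes A\to B_i$ satisfying $\bigcap_{i=1}^n\ker q_i=\{0\}$, together with $*$-homomorphisms $\sigma_i:A\to B_i\otimes C[0,1]$ such that $\mathrm{ev}_k\circ\sigma_i=q_i\circ p_k$ for $k=0,1$ and all $i$; $TC(A)=\infty$ if no such $n$ exists. *)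

theory Defs
  imports "HOL-Analysis.Analysis" "Jordan_Normal_Form.Matrix" "HOL-Library.Extended_Nat"
begin

abbreviation Mn :: "nat \<Rightarrow> complex mat set" where
  "Mn n \<equiv> carrier_mat n n"

definition ctrans :: "complex mat \<Rightarrow> complex mat" where
  "ctrans A = mat (dim_col A) (dim_row A) (\<lambda>(i,j). cnj (A $$ (j,i)))"

text \<open>Kronecker product; M_n \<otimes> M_n = M_(n*n) with a \<otimes> b = kron a b.\<close>
definition kron :: "complex mat \<Rightarrow> complex mat \<Rightarrow> complex mat" where
  "kron A B = mat (dim_row A * dim_row B) (dim_col A * dim_col B)
     (\<lambda>(i,j). A $$ (i div dim_row B, j div dim_col B) * B $$ (i mod dim_row B, j mod dim_col B))"

definition p0 :: "nat \<Rightarrow> complex mat \<Rightarrow> complex mat" where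
  "p0 n a = kron a (1\<^sub>m n)"
definition p1 :: "nat \<Rightarrow> complex mat \<Rightarrow> complex mat" where
  "p1 n a = kron (1\<^sub>m n) a"

text \<open>A (finite-dimensional, hence C*-) *-subalgebra of M_m.\<close>
definition star_subalg :: "nat \<Rightarrow> complex mat set \<Rightarrow> bool" where
  "star_subalg m B \<longleftrightarrow> B \<subseteq> carrier_mat m m \<and> 0\<^sub>m m m \<in> B \<and>
     (\<forall>x\<in>B. \<forall>y\<in>B. x + y \<in> B \<and> x * y \<in> B) \<and>
     (\<forall>c. \<forall>x\<in>B. c \<cdot>\<^sub>m x \<in> B) \<and> (\<forall>x\<in>B. ctrans x \<in> B)"

definition star_hom :: "nat \<Rightarrow> complex mat set \<Rightarrow> (complex mat \<Rightarrow> complex mat) \<Rightarrow> bool" where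
  "star_hom k B f \<longleftrightarrow> (\<forall>x\<in>carrier_mat k k. f x \<in> B) \<and>
     (\<forall>x\<in>carrier_mat k k. \<forall>y\<in>carrier_mat k k.
        f (x + y) = f x + f y \<and> f (x * y) = f x * f y) \<and>
     (\<forall>c. \<forall>x\<in>carrier_mat k k. f (c \<cdot>\<^sub>m x) = c \<cdot>\<^sub>m f x) \<and>
     (\<forall>x\<in>carrier_mat k k. f (ctrans x) = ctrans (f x))"

text \<open>One member of a cover: a quotient q : M_n \<otimes> M_n \<rightarrow> B (B \<subseteq> M_m) together with
  a *-homomorphism sigma : M_n \<rightarrow> B \<otimes> C[0,1] = C([0,1],B), given as a family
  of *-homomorphisms sigma(-)(t), t \<in> [0,1], continuous in t, with
  ev_0 \<circ> sigma = q \<circ> p_0 and ev_1 \<circ> sigma = q \<circ> p_1.\<close>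
definition TC_piece :: "nat \<Rightarrow> nat \<Rightarrow> complex mat set \<Rightarrow> (complex mat \<Rightarrow> complex mat)
     \<Rightarrow> (complex mat \<Rightarrow> real \<Rightarrow> complex mat) \<Rightarrow> bool" where
  "TC_piece n m B q \<sigma> \<longleftrightarrow>
     star_subalg m B \<and> star_hom (n*n) B q \<and> q ` carrier_mat (n*n) (n*n) = B \<and>
     (\<forall>t\<in>{0..1}. star_hom n B (\<lambda>a. \<sigma> a t)) \<and>
     (\<forall>a\<in>carrier_mat n n. \<forall>i<m. \<forall>j<m. continuous_on {0..1} (\<lambda>t. \<sigma> a t $$ (i,j))) \<and>
     (\<forall>a\<in>carrier_mat n n. \<sigma> a 0 = q (p0 n a) \<and> \<sigma> a 1 = q (p1 n a))"

definition TC_cover :: "nat \<Rightarrow> nat \<Rightarrow> bool" where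
  "TC_cover n k \<longleftrightarrow> (\<exists>m B q \<sigma>. (\<forall>i<k. TC_piece n (m i) (B i) (q i) (\<sigma> i)) \<and>
     (\<forall>x\<in>carrier_mat (n*n) (n*n). (\<forall>i<k. q i x = 0\<^sub>m (m i) (m i)) \<longrightarrow> x = 0\<^sub>m (n*n) (n*n)))"

definition TC_Mn :: "nat \<Rightarrow> enat" where
  "TC_Mn n = (if \<exists>k. TC_cover n k then enat (LEAST k. TC_cover n k) else \<infinity>)"

end

theory Submission
  imports Defs
begin

(* A single piece suffices, with q the identity of M_n \<otimes> M_n = M_(n*n). The flip F of
   C^n \<otimes> C^n is a self-adjoint unitary with F (a \<otimes> 1) F = 1 \<otimes> a, and the unitaries
   U_t = (1 + F)/2 + e^(i pi t) (1 - F)/2 join U_0 = 1 to U_1 = F. Conjugating p_0 by U_t is a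
   continuous family of *-homomorphisms from p_0 to p_1. Zero pieces cannot work since
   M_n \<otimes> M_n is nonzero for n \<ge> 1. *)

lemma ctrans_dims [simp]: "dim_row (ctrans A) = dim_col A" "dim_col (ctrans A) = dim_row A"
  unfolding ctrans_def by simp_all

lemma ctrans_carrier_mat [simp]: "A \<in> carrier_mat r c \<Longrightarrow> ctrans A \<in> carrier_mat c r"
  unfolding carrier_mat_def by simp

lemma ctrans_index [simp]:
  "i < dim_col A \<Longrightarrow> j < dim_row A \<Longrightarrow> ctrans A $$ (i,j) = cnj (A $$ (j,i))"
  unfolding ctrans_def by simp

lemma ctrans_ctrans [simp]: "ctrans (ctrans A) = A"
  by (rule eq_matI) simp_all

lemma ctrans_one [simp]: "ctrans (1\<^sub>m n) = 1\<^sub>m n"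
  by (rule eq_matI) simp_all

lemma ctrans_mult:
  assumes A: "A \<in> carrier_mat r k" and B: "B \<in> carrier_mat k c"
  shows "ctrans (A * B) = ctrans B * ctrans A"
proof (rule eq_matI)
  fix i j assume "i < dim_row (ctrans B * ctrans A)" "j < dim_col (ctrans B * ctrans A)"
  with A B have i: "i < c" and j: "j < r" by simp_all
  have "ctrans (A * B) $$ (i,j) = cnj (\<Sum>l<k. A $$ (j,l) * B $$ (l,i))"
    using A B i j by (simp add: scalar_prod_def lessThan_atLeast0)
  also have "\<dots> = (\<Sum>l<k. cnj (B $$ (l,i)) * cnj (A $$ (j,l)))"
    by (simp add: mult.commute)
  also have "\<dots> = (ctrans B * ctrans A) $$ (i,j)"
    using A B i j by (simp add: scalar_prod_def lessThan_atLeast0)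
  finally show "ctrans (A * B) $$ (i,j) = (ctrans B * ctrans A) $$ (i,j)" .
qed (use A B in simp_all)

lemma kron_dims [simp]:
  "dim_row (kron A B) = dim_row A * dim_row B" "dim_col (kron A B) = dim_col A * dim_col B"
  unfolding kron_def by simp_all

lemma kron_index:
  "i < dim_row A * dim_row B \<Longrightarrow> j < dim_col A * dim_col B \<Longrightarrow>
   kron A B $$ (i,j) = A $$ (i div dim_row B, j div dim_col B) * B $$ (i mod dim_row B, j mod dim_col B)"
  unfolding kron_def by simp

lemma less_mult_imp_mod_less: "m < i * n \<Longrightarrow> m mod n < (n::nat)"
  by (cases "n = 0") auto

lemma mixed_radix_less: "u < a \<Longrightarrow> v < b \<Longrightarrow> v + u * b < a * (b::nat)"
proof -
  assume "u < a" "v < b"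
  then have "v + u * b < Suc u * b" by simp
  also have "\<dots> \<le> a * b" using \<open>u < a\<close> by (intro mult_le_mono1) simp
  finally show ?thesis .
qed

lemma kron_add_left:
  assumes "A \<in> carrier_mat r c" "A' \<in> carrier_mat r c"
  shows "kron (A + A') B = kron A B + kron A' B"
proof (rule eq_matI)
  fix i j assume "i < dim_row (kron A B + kron A' B)" "j < dim_col (kron A B + kron A' B)"
  with assms have "i < r * dim_row B" "j < c * dim_col B" by auto
  with assms show "kron (A + A') B $$ (i,j) = (kron A B + kron A' B) $$ (i,j)"
    by (simp add: kron_index less_mult_imp_div_less distrib_right)
qed (use assms in auto)

lemma kron_smult_left: "kron (a \<cdot>\<^sub>m A) B = a \<cdot>\<^sub>m kron A B"
proof (rule eq_matI)
  fix i j assume "i < dim_row (a \<cdot>\<^sub>m kron A B)" "j < dim_col (a \<cdot>\<^sub>m kron A B)"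
  then show "kron (a \<cdot>\<^sub>m A) B $$ (i,j) = (a \<cdot>\<^sub>m kron A B) $$ (i,j)"
    by (simp add: kron_index less_mult_imp_div_less)
qed simp_all

lemma ctrans_kron: "ctrans (kron A B) = kron (ctrans A) (ctrans B)"
proof (rule eq_matI)
  fix i j assume "i < dim_row (kron (ctrans A) (ctrans B))" "j < dim_col (kron (ctrans A) (ctrans B))"
  then have "i < dim_col A * dim_col B" "j < dim_row A * dim_row B" by simp_all
  then show "ctrans (kron A B) $$ (i,j) = kron (ctrans A) (ctrans B) $$ (i,j)"
    by (simp add: kron_index less_mult_imp_div_less less_mult_imp_mod_less)
qed simp_all

lemma kron_mult:
  assumes A: "A \<in> carrier_mat ra ca" and B: "B \<in> carrier_mat rb cb"
    and C: "C \<in> carrier_mat ca cc" and D: "D \<in> carrier_mat cb cd"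
  shows "kron A B * kron C D = kron (A * C) (B * D)"
proof (rule eq_matI)
  fix i j assume "i < dim_row (kron (A * C) (B * D))" "j < dim_col (kron (A * C) (B * D))"
  with A B C D have i: "i < ra * rb" and j: "j < cc * cd" by simp_all
  have "(kron A B * kron C D) $$ (i,j) = (\<Sum>k<ca * cb. kron A B $$ (i,k) * kron C D $$ (k,j))"
    using A B C D i j by (simp add: scalar_prod_def lessThan_atLeast0)
  also have "\<dots> = (\<Sum>u<ca. \<Sum>v<cb. kron A B $$ (i, v + u * cb) * kron C D $$ (v + u * cb, j))"
    by (rule sum_mult_product)
  also have "\<dots> = (\<Sum>u<ca. \<Sum>v<cb. (A $$ (i div rb, u) * C $$ (u, j div cd))
                                      * (B $$ (i mod rb, v) * D $$ (v, j mod cd)))"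
  proof (intro sum.cong refl)
    fix u v assume "u \<in> {..<ca}" "v \<in> {..<cb}"
    then have "v + u * cb < ca * cb" "(v + u * cb) div cb = u" "(v + u * cb) mod cb = v"
      by (simp_all add: mixed_radix_less)
    with A B C D i j show "kron A B $$ (i, v + u * cb) * kron C D $$ (v + u * cb, j)
      = (A $$ (i div rb, u) * C $$ (u, j div cd)) * (B $$ (i mod rb, v) * D $$ (v, j mod cd))"
      by (simp add: kron_index)
  qed
  also have "\<dots> = (A * C) $$ (i div rb, j div cd) * (B * D) $$ (i mod rb, j mod cd)"
    using A B C D i j
    by (simp add: sum_product scalar_prod_def lessThan_atLeast0 less_mult_imp_div_less less_mult_imp_mod_less)
  also have "\<dots> = kron (A * C) (B * D) $$ (i,j)"
    using A B C D i j by (simp add: kron_index)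
  finally show "(kron A B * kron C D) $$ (i,j) = kron (A * C) (B * D) $$ (i,j)" .
qed (use A B C D in auto)

lemma star_hom_p0: "star_hom n (carrier_mat (n*n) (n*n)) (p0 n)"
  unfolding star_hom_def p0_def
  by (auto simp: kron_add_left kron_smult_left ctrans_kron kron_mult[of _ n n _ n n _ n _ n])

lemma p0_carrier: "a \<in> carrier_mat n n \<Longrightarrow> p0 n a \<in> carrier_mat (n*n) (n*n)"
  using star_hom_p0 unfolding star_hom_def by blast

lemma star_hom_comp:
  assumes "star_hom k (carrier_mat N N) f" "star_hom N B g"
  shows "star_hom k B (g \<circ> f)"
  using assms unfolding star_hom_def by (simp add: subset_iff)

lemma star_hom_unitary_conj:
  assumes U: "U \<in> carrier_mat N N" and unitary: "ctrans U * U = 1\<^sub>m N"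
  shows "star_hom N (carrier_mat N N) (\<lambda>P. U * P * ctrans U)"
  unfolding star_hom_def
proof (intro conjI ballI allI)
  have U': "ctrans U \<in> carrier_mat N N" using U by simp
  fix P Q :: "complex mat" and c :: complex
  assume P: "P \<in> carrier_mat N N" and Q: "Q \<in> carrier_mat N N"
  have UP: "U * P \<in> carrier_mat N N" and UQ: "U * Q \<in> carrier_mat N N"
    and QU: "Q * ctrans U \<in> carrier_mat N N"
    using U U' P Q by simp_all
  show "U * P * ctrans U \<in> carrier_mat N N" using UP U' by simp
  show "U * (P + Q) * ctrans U = U * P * ctrans U + U * Q * ctrans U"
    using mult_add_distrib_mat[OF U P Q] add_mult_distrib_mat[OF UP UQ U'] by simp
  have "U * (P * Q) * ctrans U = U * P * (Q * ctrans U)"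
    using assoc_mult_mat[OF U P QU] assoc_mult_mat[OF P Q U'] assoc_mult_mat[OF U _ U', of "P * Q"] P Q
    by simp
  also have "Q * ctrans U = ctrans U * (U * (Q * ctrans U))"
    using assoc_mult_mat[OF U' U QU] left_mult_one_mat[OF QU] unitary by simp
  also have "U * P * (ctrans U * (U * (Q * ctrans U))) = U * P * ctrans U * (U * Q * ctrans U)"
    using assoc_mult_mat[OF UP U' mult_carrier_mat[OF UQ U']] assoc_mult_mat[OF U Q U'] by simp
  finally show "U * (P * Q) * ctrans U = U * P * ctrans U * (U * Q * ctrans U)" .
  show "U * (c \<cdot>\<^sub>m P) * ctrans U = c \<cdot>\<^sub>m (U * P * ctrans U)"
    using mult_smult_distrib[OF U P] mult_smult_assoc_mat[OF UP U'] by simp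
  have "ctrans (U * P * ctrans U) = U * (ctrans P * ctrans U)"
    using ctrans_mult[OF UP U'] ctrans_mult[OF U P] by simp
  then show "U * ctrans P * ctrans U = ctrans (U * P * ctrans U)"
    using assoc_mult_mat[OF U ctrans_carrier_mat[OF P] U'] by simp
qed

(* Row/column i = u * n + v of M_n \<otimes> M_n (see kron) is the basis vector e_u \<otimes> e_v;
   tensor_swap n i is the index of e_v \<otimes> e_u. *)
definition tensor_swap :: "nat \<Rightarrow> nat \<Rightarrow> nat" where
  "tensor_swap n i = i div n + (i mod n) * n"

lemma tensor_swap_less: "i < n * n \<Longrightarrow> tensor_swap n i < n * n"
  unfolding tensor_swap_def
  by (intro mixed_radix_less less_mult_imp_div_less less_mult_imp_mod_less)

lemma tensor_swap_div: "i < n * n \<Longrightarrow> tensor_swap n i div n = i mod n"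
  unfolding tensor_swap_def using less_mult_imp_div_less[of i n n] by (cases "n = 0") simp_all

lemma tensor_swap_mod: "i < n * n \<Longrightarrow> tensor_swap n i mod n = i div n"
  unfolding tensor_swap_def using less_mult_imp_div_less[of i n n] by simp

lemma tensor_swap_tensor_swap: "i < n * n \<Longrightarrow> tensor_swap n (tensor_swap n i) = i"
  using tensor_swap_div tensor_swap_mod unfolding tensor_swap_def
  by (metis add.commute div_mult_mod_eq)

lemma tensor_swap_eq_iff:
  "i < n * n \<Longrightarrow> j < n * n \<Longrightarrow> j = tensor_swap n i \<longleftrightarrow> i = tensor_swap n j"
  using tensor_swap_tensor_swap by metis

lemma kron_tensor_swap_index:
  assumes "A \<in> carrier_mat n n" "B \<in> carrier_mat n n" "i < n * n" "j < n * n"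
  shows "kron A B $$ (tensor_swap n i, tensor_swap n j) = kron B A $$ (i,j)"
  using assms
  by (simp add: kron_index tensor_swap_less tensor_swap_div tensor_swap_mod mult.commute)

(* a \<cdot> 1 + b \<cdot> F for the flip F of C^n \<otimes> C^n. *)
definition flip_comb :: "nat \<Rightarrow> complex \<Rightarrow> complex \<Rightarrow> complex mat" where
  "flip_comb n a b = mat (n * n) (n * n)
     (\<lambda>(i,j). (if i = j then a else 0) + (if j = tensor_swap n i then b else 0))"

lemma flip_comb_dims [simp]:
  "dim_row (flip_comb n a b) = n * n" "dim_col (flip_comb n a b) = n * n"
  unfolding flip_comb_def by simp_all

lemma flip_comb_carrier [simp]: "flip_comb n a b \<in> carrier_mat (n * n) (n * n)"
  by (rule carrier_matI) simp_all

lemma flip_comb_index: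
  "i < n * n \<Longrightarrow> j < n * n \<Longrightarrow>
   flip_comb n a b $$ (i,j) = (if i = j then a else 0) + (if j = tensor_swap n i then b else 0)"
  unfolding flip_comb_def by simp

lemma flip_comb_mult_left:
  assumes W: "W \<in> carrier_mat (n * n) c"
  shows "flip_comb n a b * W = mat (n * n) c (\<lambda>(i,j). a * W $$ (i,j) + b * W $$ (tensor_swap n i, j))"
proof (rule eq_matI)
  fix i j assume "i < dim_row (mat (n * n) c (\<lambda>(i,j). a * W $$ (i,j) + b * W $$ (tensor_swap n i, j)))"
    "j < dim_col (mat (n * n) c (\<lambda>(i,j). a * W $$ (i,j) + b * W $$ (tensor_swap n i, j)))"
  then have i: "i < n * n" and j: "j < c" by simp_all
  have "(flip_comb n a b * W) $$ (i,j) = (\<Sum>k<n * n. flip_comb n a b $$ (i,k) * W $$ (k,j))"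
    using W i j by (simp add: scalar_prod_def lessThan_atLeast0)
  also have "\<dots> = (\<Sum>k<n * n. (if i = k then a * W $$ (k,j) else 0)
                    + (if k = tensor_swap n i then b * W $$ (k,j) else 0))"
    using i by (intro sum.cong refl) (simp add: flip_comb_index distrib_right)
  also have "\<dots> = a * W $$ (i,j) + b * W $$ (tensor_swap n i, j)"
    using i tensor_swap_less[OF i] by (simp add: sum.distrib sum.delta sum.delta')
  finally show "(flip_comb n a b * W) $$ (i,j)
      = mat (n * n) c (\<lambda>(i,j). a * W $$ (i,j) + b * W $$ (tensor_swap n i, j)) $$ (i,j)"
    using i j by simp
qed (use W in simp_all)

lemma flip_comb_mult_right:
  assumes W: "W \<in> carrier_mat r (n * n)"
  shows "W * flip_comb n a b = mat r (n * n) (\<lambda>(i,j). a * W $$ (i,j) + b * W $$ (i, tensor_swap n j))"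
proof (rule eq_matI)
  fix i j assume "i < dim_row (mat r (n * n) (\<lambda>(i,j). a * W $$ (i,j) + b * W $$ (i, tensor_swap n j)))"
    "j < dim_col (mat r (n * n) (\<lambda>(i,j). a * W $$ (i,j) + b * W $$ (i, tensor_swap n j)))"
  then have i: "i < r" and j: "j < n * n" by simp_all
  have "(W * flip_comb n a b) $$ (i,j) = (\<Sum>k<n * n. W $$ (i,k) * flip_comb n a b $$ (k,j))"
    using W i j by (simp add: scalar_prod_def lessThan_atLeast0)
  also have "\<dots> = (\<Sum>k<n * n. (if k = j then a * W $$ (i,k) else 0)
                    + (if k = tensor_swap n j then b * W $$ (i,k) else 0))"
  proof (intro sum.cong refl)
    fix k assume "k \<in> {..<n * n}"
    then have k: "k < n * n" by simp
    show "W $$ (i,k) * flip_comb n a b $$ (k,j) = (if k = j then a * W $$ (i,k) else 0)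
                    + (if k = tensor_swap n j then b * W $$ (i,k) else 0)"
      using tensor_swap_eq_iff[OF k j] by (simp add: flip_comb_index k j distrib_left)
  qed
  also have "\<dots> = a * W $$ (i,j) + b * W $$ (i, tensor_swap n j)"
    using j tensor_swap_less[OF j] by (simp add: sum.distrib sum.delta sum.delta')
  finally show "(W * flip_comb n a b) $$ (i,j)
      = mat r (n * n) (\<lambda>(i,j). a * W $$ (i,j) + b * W $$ (i, tensor_swap n j)) $$ (i,j)"
    using i j by simp
qed (use W in simp_all)

lemma flip_comb_mult:
  "flip_comb n a b * flip_comb n c d = flip_comb n (a * c + b * d) (a * d + b * c)"
proof (rule eq_matI)
  fix i j assume "i < dim_row (flip_comb n (a * c + b * d) (a * d + b * c))"
    "j < dim_col (flip_comb n (a * c + b * d) (a * d + b * c))"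
  then have i: "i < n * n" and j: "j < n * n" by simp_all
  show "(flip_comb n a b * flip_comb n c d) $$ (i,j) = flip_comb n (a * c + b * d) (a * d + b * c) $$ (i,j)"
    unfolding flip_comb_mult_left[OF flip_comb_carrier]
    using tensor_swap_eq_iff[OF i j] tensor_swap_tensor_swap[OF i] tensor_swap_less[OF i]
    by (auto simp: flip_comb_index i j algebra_simps)
qed simp_all

lemma ctrans_flip_comb: "ctrans (flip_comb n a b) = flip_comb n (cnj a) (cnj b)"
proof (rule eq_matI)
  fix i j assume "i < dim_row (flip_comb n (cnj a) (cnj b))" "j < dim_col (flip_comb n (cnj a) (cnj b))"
  then have i: "i < n * n" and j: "j < n * n" by simp_all
  show "ctrans (flip_comb n a b) $$ (i,j) = flip_comb n (cnj a) (cnj b) $$ (i,j)"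
    using tensor_swap_eq_iff[OF i j] by (simp add: flip_comb_index i j)
qed simp_all

lemma flip_comb_one_zero: "flip_comb n 1 0 = 1\<^sub>m (n * n)"
  by (rule eq_matI) (simp_all add: flip_comb_index)

lemma flip_comb_unitary:
  assumes "cnj a * a + cnj b * b = 1" and "cnj a * b + cnj b * a = 0"
  shows "ctrans (flip_comb n a b) * flip_comb n a b = 1\<^sub>m (n * n)"
  unfolding ctrans_flip_comb flip_comb_mult assms flip_comb_one_zero ..

lemma flip_comb_conj_index:
  assumes P: "P \<in> carrier_mat (n * n) (n * n)" and i: "i < n * n" and j: "j < n * n"
  shows "(flip_comb n a b * P * ctrans (flip_comb n a b)) $$ (i,j)
    = cnj a * (a * P $$ (i,j) + b * P $$ (tensor_swap n i, j))
      + cnj b * (a * P $$ (i, tensor_swap n j) + b * P $$ (tensor_swap n i, tensor_swap n j))"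
proof -
  have FP: "flip_comb n a b * P \<in> carrier_mat (n * n) (n * n)"
    using mult_carrier_mat[OF flip_comb_carrier P] .
  have "(flip_comb n a b * P * flip_comb n (cnj a) (cnj b)) $$ (i,j)
    = cnj a * (flip_comb n a b * P) $$ (i,j) + cnj b * (flip_comb n a b * P) $$ (i, tensor_swap n j)"
    using i j by (simp add: flip_comb_mult_right[OF FP] mult.commute)
  then show ?thesis
    using i j tensor_swap_less[OF i] tensor_swap_less[OF j]
    by (simp add: ctrans_flip_comb flip_comb_mult_left[OF P] algebra_simps)
qed

definition flip_path :: "nat \<Rightarrow> real \<Rightarrow> complex mat" where
  "flip_path n t =
     flip_comb n ((1 + exp (\<i> * of_real (pi * t))) / 2) ((1 - exp (\<i> * of_real (pi * t))) / 2)"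

lemma flip_comb_phase_unitary:
  fixes z :: complex
  assumes "cnj z * z = 1"
  shows "ctrans (flip_comb n ((1 + z) / 2) ((1 - z) / 2)) * flip_comb n ((1 + z) / 2) ((1 - z) / 2)
    = 1\<^sub>m (n * n)"
  using assms by (intro flip_comb_unitary) (simp_all add: field_simps algebra_simps)

lemma flip_path_unitary: "ctrans (flip_path n t) * flip_path n t = 1\<^sub>m (n * n)"
  unfolding flip_path_def by (intro flip_comb_phase_unitary) (simp add: exp_cnj flip: exp_add)

definition flip_homotopy :: "nat \<Rightarrow> complex mat \<Rightarrow> real \<Rightarrow> complex mat" where
  "flip_homotopy n a t = flip_path n t * p0 n a * ctrans (flip_path n t)"

lemma star_hom_flip_homotopy: "star_hom n (carrier_mat (n * n) (n * n)) (\<lambda>a. flip_homotopy n a t)"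
  using star_hom_comp[OF star_hom_p0 star_hom_unitary_conj[OF _ flip_path_unitary]]
  by (simp add: flip_homotopy_def flip_path_def comp_def)

lemma flip_homotopy_index:
  assumes "a \<in> carrier_mat n n" "i < n * n" "j < n * n"
  shows "flip_homotopy n a t $$ (i,j) =
    (let z = exp (\<i> * of_real (pi * t)); c = (1 + z) / 2; s = (1 - z) / 2; P = p0 n a in
     cnj c * (c * P $$ (i,j) + s * P $$ (tensor_swap n i, j))
     + cnj s * (c * P $$ (i, tensor_swap n j) + s * P $$ (tensor_swap n i, tensor_swap n j)))"
  unfolding flip_homotopy_def flip_path_def Let_def
  using assms by (intro flip_comb_conj_index p0_carrier)

lemma flip_homotopy_continuous:
  assumes "a \<in> carrier_mat n n" "i < n * n" "j < n * n"
  shows "continuous_on S (\<lambda>t. flip_homotopy n a t $$ (i,j))"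
  unfolding flip_homotopy_index[OF assms] Let_def by (intro continuous_intros) auto

lemma flip_homotopy_carrier:
  "a \<in> carrier_mat n n \<Longrightarrow> flip_homotopy n a t \<in> carrier_mat (n * n) (n * n)"
  using star_hom_flip_homotopy unfolding star_hom_def by blast

lemma flip_homotopy_0:
  assumes a: "a \<in> carrier_mat n n"
  shows "flip_homotopy n a 0 = p0 n a"
proof (rule eq_matI)
  fix i j assume "i < dim_row (p0 n a)" "j < dim_col (p0 n a)"
  with p0_carrier[OF a] have "i < n * n" "j < n * n" by auto
  with a show "flip_homotopy n a 0 $$ (i,j) = p0 n a $$ (i,j)"
    by (simp add: flip_homotopy_index)
qed (use flip_homotopy_carrier[OF a] p0_carrier[OF a] in auto)

lemma flip_homotopy_1:
  assumes a: "a \<in> carrier_mat n n"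
  shows "flip_homotopy n a 1 = p1 n a"
proof (rule eq_matI)
  fix i j assume "i < dim_row (p1 n a)" "j < dim_col (p1 n a)"
  with a have "i < n * n" "j < n * n" by (simp_all add: p1_def)
  with a show "flip_homotopy n a 1 $$ (i,j) = p1 n a $$ (i,j)"
    by (simp add: flip_homotopy_index p0_def p1_def kron_tensor_swap_index)
qed (use flip_homotopy_carrier[OF a, of 1] a in \<open>auto simp: p1_def\<close>)

lemma TC_cover_one: "TC_cover n 1"
proof -
  let ?B = "carrier_mat (n * n) (n * n)"
  have "star_subalg (n * n) ?B"
    unfolding star_subalg_def by simp
  moreover have "star_hom (n * n) ?B (\<lambda>x. x)"
    unfolding star_hom_def by simp
  ultimately have "TC_piece n (n * n) ?B (\<lambda>x. x) (flip_homotopy n)"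
    unfolding TC_piece_def
    using star_hom_flip_homotopy flip_homotopy_continuous flip_homotopy_0 flip_homotopy_1
    by blast
  then show ?thesis
    unfolding TC_cover_def
    by (intro exI[of _ "\<lambda>_. n * n"] exI[of _ "\<lambda>_. ?B"] exI[of _ "\<lambda>_ x. x"]
        exI[of _ "\<lambda>_. flip_homotopy n"]) simp
qed

lemma not_TC_cover_zero: "n \<ge> 1 \<Longrightarrow> \<not> TC_cover n 0"
proof
  assume "n \<ge> 1" "TC_cover n 0"
  then have "(1\<^sub>m (n * n) :: complex mat) = 0\<^sub>m (n * n) (n * n)"
    unfolding TC_cover_def by simp
  then have "(1\<^sub>m (n * n) :: complex mat) $$ (0,0) = 0\<^sub>m (n * n) (n * n) $$ (0,0)"
    by simp
  with \<open>n \<ge> 1\<close> show False by simp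
qed

theorem mainTheorem10:
  fixes n :: nat
  assumes "n \<ge> 1"
  shows "TC_Mn n = 1"
proof -
  have "(LEAST k. TC_cover n k) = 1"
  proof (rule Least_equality)
    show "TC_cover n 1" by (rule TC_cover_one)
    show "1 \<le> k" if "TC_cover n k" for k
      using that not_TC_cover_zero[OF assms] by (cases k) auto
  qed
  then show ?thesis unfolding TC_Mn_def using TC_cover_one by (auto simp: one_enat_def)
qed

end
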